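(* Let ${\mathfrak h}$ be an $n$-dimensional complex Hilbert space, $L:{\mathfrak h}\to{\mathfrak h}$ symmetric, $w\in{\mathfrak h}$, $\theta\in\mathbb R$, with $\{L^kw\}_{k=0}^{n-1}$ a basis of ${\mathfrak h}$, and let $p$ be the polynomial defined in the context. Then $$p(z)=(\theta z+1)\det(z^2-L)-z\sum_{j=1}^n\Big(\sum_{k=1}^ja_{j-k}\langle w,L^{k-1}w\rangle\Big)z^{2(n-j)},$$ where $a_0=1$ and $a_j:=(-1)^j\sum_{i_1<\dots<i_j}\lambda_{i_1}\cdots\lambda_{i_j}$ for $1\le j\le n$.
   Context: Under the basis assumption $L$ has $n$ distinct eigenvalues $\lambda_1,\dots,\lambda_n$; $V$ denotes the Vandermonde matrix $V_{ki}=\lambda_i^{k-1}$ ($1\le k,i\le n$). Define $p_1(z)=\theta z+1$, $p_k(z)=z^2p_{k-1}(z)-\langle w,L^{k-2}w\rangle z$ for $k\ge2$, and $p(z):=p_{n+1}(z)-\sum_{i,j=1}^n\lambda_i^n(V^{-1})_{ij}\,p_j(z)$. *)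

theory Defs
  imports "Jordan_Normal_Form.Gauss_Jordan_Elimination" "Jordan_Normal_Form.Char_Poly"
begin

definition cinner :: "complex vec \<Rightarrow> complex vec \<Rightarrow> complex" where
  "cinner v u = (\<Sum>i<dim_vec v. cnj (v $ i) * u $ i)"

definition hermitian_mat :: "nat \<Rightarrow> complex mat \<Rightarrow> bool" where
  "hermitian_mat n L \<longleftrightarrow> L \<in> carrier_mat n n \<and>
     (\<forall>i<n. \<forall>j<n. L $$ (i, j) = cnj (L $$ (j, i)))"

definition krylov_basis :: "nat \<Rightarrow> complex mat \<Rightarrow> complex vec \<Rightarrow> bool" where
  "krylov_basis n L w \<longleftrightarrow>
     (\<forall>v \<in> carrier_vec n. \<exists>c. \<forall>i<n. v $ i = (\<Sum>k<n. c k * ((L ^\<^sub>m k) *\<^sub>v w) $ i)) \<and>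
     (\<forall>c. (\<forall>i<n. (\<Sum>k<n. c k * ((L ^\<^sub>m k) *\<^sub>v w) $ i) = 0) \<longrightarrow> (\<forall>k<n. c k = 0))"

fun pk :: "complex mat \<Rightarrow> complex vec \<Rightarrow> real \<Rightarrow> nat \<Rightarrow> complex \<Rightarrow> complex" where
  "pk L w \<theta> 0 z = 0"
| "pk L w \<theta> (Suc 0) z = of_real \<theta> * z + 1"
| "pk L w \<theta> (Suc (Suc k)) z = z^2 * pk L w \<theta> (Suc k) z - cinner w ((L ^\<^sub>m k) *\<^sub>v w) * z"

(* Vandermonde matrix V_{ki} = lambda_i^{k-1}, 1 <= k,i <= n (stored 0-based) *)
definition vandermonde :: "nat \<Rightarrow> (nat \<Rightarrow> complex) \<Rightarrow> complex mat" where
  "vandermonde n lam = mat n n (\<lambda>(k, i). lam (i + 1) ^ k)"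

definition Vinv :: "nat \<Rightarrow> (nat \<Rightarrow> complex) \<Rightarrow> nat \<Rightarrow> nat \<Rightarrow> complex" where
  "Vinv n lam i j = the (mat_inverse (vandermonde n lam)) $$ (i - 1, j - 1)"

definition pfun :: "nat \<Rightarrow> complex mat \<Rightarrow> complex vec \<Rightarrow> real \<Rightarrow> (nat \<Rightarrow> complex) \<Rightarrow> complex \<Rightarrow> complex" where
  "pfun n L w \<theta> lam z = pk L w \<theta> (n + 1) z
     - (\<Sum>i\<in>{1..n}. \<Sum>j\<in>{1..n}. lam i ^ n * Vinv n lam i j * pk L w \<theta> j z)"

definition acoef :: "nat \<Rightarrow> (nat \<Rightarrow> complex) \<Rightarrow> nat \<Rightarrow> complex" where
  "acoef n lam j = (-1) ^ j * (\<Sum>S | S \<subseteq> {1..n} \<and> card S = j. \<Prod>i\<in>S. lam i)"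

end

theory Submission
  imports Defs
begin

text \<open>
  By Vieta every eigenvalue satisfies \<open>\<lambda>\<^sub>i\<^sup>n = -(a\<^sub>n + a\<^sub>n\<^sub>-\<^sub>1 \<lambda>\<^sub>i + \<dots> + a\<^sub>1 \<lambda>\<^sub>i\<^sup>n\<^sup>-\<^sup>1)\<close>, so the
  row \<open>(\<lambda>\<^sub>i\<^sup>n)\<^sub>i\<close> is a fixed combination of the rows of the Vandermonde matrix
  \<open>V\<close>, and multiplying it by \<open>V\<^sup>-\<^sup>1\<close> just reads off the coefficients. Hence
  \<open>p = p\<^sub>n\<^sub>+\<^sub>1 + a\<^sub>1 p\<^sub>n + \<dots> + a\<^sub>n p\<^sub>1\<close>. Unrolling the recursion of the \<open>p\<^sub>k\<close>, the
  terms carrying \<open>\<theta>z + 1\<close> add up to \<open>(\<theta>z + 1) \<Sum>\<^sub>j a\<^sub>n\<^sub>-\<^sub>j z\<^sup>2\<^sup>j = (\<theta>z + 1) det(z\<^sup>2 - L)\<close>,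
  and the remaining double sum is reindexed along its diagonals.
\<close>

lemma prod_diff_eq_sum_acoef:
  fixes x :: complex
  shows "(\<Prod>i\<in>{1..n}. x - lam i) = (\<Sum>m\<le>n. acoef n lam m * x ^ (n - m))"
proof -
  let ?A = "{1..n::nat}"
  have "(\<Prod>i\<in>?A. x - lam i) = (\<Prod>i\<in>?A. - lam i + x)" by simp
  also have "\<dots> = (\<Sum>X\<in>Pow ?A. (\<Prod>i\<in>X. - lam i) * (\<Prod>i\<in>?A - X. x))"
    by (rule prod_add) simp
  also have "\<dots> = (\<Sum>X\<in>Pow ?A. (-1) ^ card X * (\<Prod>i\<in>X. lam i) * x ^ (n - card X))"
  proof (rule sum.cong[OF refl])
    fix X assume "X \<in> Pow ?A"
    then have "finite X" by (auto intro: finite_subset)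
    with \<open>X \<in> Pow ?A\<close> have "card (?A - X) = n - card X"
      by (simp add: card_Diff_subset)
    then show "(\<Prod>i\<in>X. - lam i) * (\<Prod>i\<in>?A - X. x) = (-1) ^ card X * (\<Prod>i\<in>X. lam i) * x ^ (n - card X)"
      by (simp add: prod_uminus)
  qed
  also have "\<dots> = (\<Sum>m\<le>n. \<Sum>X | X \<in> Pow ?A \<and> card X = m. (-1) ^ card X * (\<Prod>i\<in>X. lam i) * x ^ (n - card X))"
    by (rule sum.group[symmetric]) (auto intro: card_mono[of ?A, simplified])
  also have "\<dots> = (\<Sum>m\<le>n. acoef n lam m * x ^ (n - m))"
    unfolding acoef_def sum_distrib_left sum_distrib_right by (intro sum.cong) (auto simp: mult_ac)
  finally show ?thesis .
qed

lemma acoef_0 [simp]: "acoef n lam 0 = 1"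
proof -
  have "{S. S \<subseteq> {1..n} \<and> card S = 0} = {{}}"
    by (auto dest: finite_subset)
  then show ?thesis unfolding acoef_def by simp
qed

lemma power_eq_sum_acoef_if_root:
  fixes x :: complex
  assumes "(\<Prod>i\<in>{1..n}. x - lam i) = 0"
  shows "x ^ n = (\<Sum>t<n. - acoef n lam (n - t) * x ^ t)"
proof -
  have "0 = (\<Sum>m\<le>n. acoef n lam m * x ^ (n - m))"
    by (metis assms prod_diff_eq_sum_acoef)
  also have "\<dots> = (\<Sum>t\<le>n. acoef n lam (n - t) * x ^ t)"
    by (subst sum.atLeastAtMost_rev[of _ 0, simplified atLeast0AtMost]) (auto intro: sum.cong)
  also have "\<dots> = (\<Sum>t<n. acoef n lam (n - t) * x ^ t) + x ^ n"
    by (simp add: lessThan_Suc_atMost[symmetric])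
  finally show ?thesis by (simp add: sum_negf eq_neg_iff_add_eq_0 add.commute)
qed

lemma det_char_mat_eq_prod:
  fixes L :: "complex mat"
  assumes L: "L \<in> carrier_mat n n"
    and eig: "lam ` {1..n} = {\<mu>. eigenvalue L \<mu>}"
    and dist: "inj_on lam {1..n}"
  shows "det (x \<cdot>\<^sub>m 1\<^sub>m n - L) = (\<Prod>i\<in>{1..n}. x - lam i)"
proof -
  obtain as where as: "char_poly L = (\<Prod>a\<leftarrow>as. [:- a, 1:])" and len: "length as = n"
    using char_poly_factorized[OF L] by blast
  have sub: "lam ` {1..n} \<subseteq> set as"
  proof
    fix y assume "y \<in> lam ` {1..n}"
    then have "poly (char_poly L) y = 0"
      using eig eigenvalue_root_char_poly[OF L] by auto
    then show "y \<in> set as" unfolding as poly_prod_list prod_list_zero_iff by auto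
  qed
  moreover have card_lam: "card (lam ` {1..n}) = n" using dist by (simp add: card_image)
  moreover have "card (set as) \<le> n" using card_length len by metis
  ultimately have set_as: "set as = lam ` {1..n}"
    using card_seteq[OF finite_set sub] by auto
  then have "distinct as" using card_lam len by (metis card_distinct)
  with set_as have "char_poly L = (\<Prod>i\<in>{1..n}. [:- lam i, 1:])"
    using dist by (simp add: as prod.distinct_set_conv_list[symmetric] prod.reindex)
  moreover have "poly (char_poly L) x = det (x \<cdot>\<^sub>m 1\<^sub>m n - L)"
    unfolding char_poly_def char_poly_matrix_def by (rule poly_det_cong[of _ n]) (use L in auto)
  ultimately show ?thesis by (simp add: poly_prod)
qed

lemma det_char_mat_eq_sum_acoef:
  fixes L :: "complex mat"
  assumes "L \<in> carrier_mat n n"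
    and "lam ` {1..n} = {\<mu>. eigenvalue L \<mu>}"
    and "inj_on lam {1..n}"
  shows "det (x \<cdot>\<^sub>m 1\<^sub>m n - L) = (\<Sum>j\<le>n. acoef n lam (n - j) * x ^ j)"
proof -
  have "det (x \<cdot>\<^sub>m 1\<^sub>m n - L) = (\<Sum>m\<le>n. acoef n lam m * x ^ (n - m))"
    by (simp only: det_char_mat_eq_prod[OF assms] prod_diff_eq_sum_acoef)
  also have "\<dots> = (\<Sum>j\<le>n. acoef n lam (n - j) * x ^ j)"
    by (subst sum.atLeastAtMost_rev[of _ 0, simplified atLeast0AtMost]) (auto intro: sum.cong)
  finally show ?thesis .
qed

lemma coeff_eq_0_if_vanishes_at_distinct_points:
  fixes c :: "nat \<Rightarrow> complex"
  assumes dist: "inj_on lam {1..n}"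
    and vanish: "\<And>i. i \<in> {1..n} \<Longrightarrow> (\<Sum>k<n. c k * lam i ^ k) = 0"
    and "k < n"
  shows "c k = 0"
proof (rule ccontr)
  assume "c k \<noteq> 0"
  define P where "P = (\<Sum>k<n. monom (c k) k)"
  have coeff_P: "coeff P k = (if k < n then c k else 0)" for k
    unfolding P_def by (simp add: coeff_sum coeff_monom)
  with \<open>c k \<noteq> 0\<close> \<open>k < n\<close> have "P \<noteq> 0" by (metis coeff_0)
  have "degree P < n"
    using \<open>k < n\<close> by (intro degree_lessI) (auto simp: coeff_P)
  have "lam ` {1..n} \<subseteq> {x. poly P x = 0}"
    using vanish by (auto simp: P_def poly_sum poly_monom)
  then have "card (lam ` {1..n}) \<le> card {x. poly P x = 0}"
    by (intro card_mono poly_roots_finite \<open>P \<noteq> 0\<close>)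
  also have "\<dots> \<le> degree P" by (rule card_poly_roots_bound[OF \<open>P \<noteq> 0\<close>])
  finally show False using \<open>degree P < n\<close> dist by (simp add: card_image)
qed

lemma vandermonde_right_inverse:
  assumes dist: "inj_on lam {1..n}"
  obtains W where "mat_inverse (vandermonde n lam) = Some W"
    and "vandermonde n lam * W = 1\<^sub>m n" and "W \<in> carrier_mat n n"
proof -
  let ?V = "vandermonde n lam"
  have V: "?V \<in> carrier_mat n n" unfolding vandermonde_def by simp
  have "det (transpose_mat ?V) \<noteq> 0"
  proof
    assume "det (transpose_mat ?V) = 0"
    then obtain v where v: "v \<in> carrier_vec n" "v \<noteq> 0\<^sub>v n"
      and ker: "transpose_mat ?V *\<^sub>v v = 0\<^sub>v n"
      using det_0_iff_vec_prod_zero[of "transpose_mat ?V"] V by auto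
    have "(\<Sum>k<n. v $ k * lam i ^ k) = 0" if "i \<in> {1..n}" for i
    proof -
      have i: "i - 1 < n" "Suc (i - 1) = i" using that by auto
      have "(transpose_mat ?V *\<^sub>v v) $ (i - 1) = 0" using ker i by simp
      then show ?thesis
        using i v by (simp add: vandermonde_def scalar_prod_def mult.commute lessThan_atLeast0)
    qed
    then have "v = 0\<^sub>v n"
      using v(1) coeff_eq_0_if_vanishes_at_distinct_points[OF dist] by (intro eq_vecI) auto
    with v(2) show False ..
  qed
  then have "?V \<in> Units (ring_mat TYPE(complex) n undefined)"
    using det_non_zero_imp_unit[OF V] det_transpose[OF V] by simp
  then obtain W where "mat_inverse ?V = Some W"
    using mat_inverse(1)[OF V, of undefined] by (cases "mat_inverse ?V") auto
  with mat_inverse(2)[OF V] that show ?thesis by blast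
qed

lemma sum_Vinv_row_combination:
  assumes dist: "inj_on lam {1..n}" and j: "j \<in> {1..n}"
    and comb: "\<And>i. i \<in> {1..n} \<Longrightarrow> f i = (\<Sum>t<n. g t * lam i ^ t)"
  shows "(\<Sum>i\<in>{1..n}. f i * Vinv n lam i j) = g (j - 1)"
proof -
  obtain W where W: "mat_inverse (vandermonde n lam) = Some W"
    and VW: "vandermonde n lam * W = 1\<^sub>m n" and "W \<in> carrier_mat n n"
    using vandermonde_right_inverse[OF dist] by blast
  from j have "j - 1 < n" by auto
  have VW_entry: "(\<Sum>i<n. lam (Suc i) ^ t * W $$ (i, j - 1)) = (if t = j - 1 then 1 else 0)"
    if "t < n" for t
  proof -
    have "(vandermonde n lam * W) $$ (t, j - 1) = (\<Sum>i<n. lam (Suc i) ^ t * W $$ (i, j - 1))"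
      using that j \<open>W \<in> carrier_mat n n\<close> \<open>j - 1 < n\<close>
      by (simp add: vandermonde_def scalar_prod_def lessThan_atLeast0)
    then show ?thesis using VW that j by auto
  qed
  have "(\<Sum>i\<in>{1..n}. f i * Vinv n lam i j) = (\<Sum>i<n. (\<Sum>t<n. g t * lam (Suc i) ^ t) * W $$ (i, j - 1))"
    by (simp add: Vinv_def W sum.atLeast1_atMost_eq comb)
  also have "\<dots> = (\<Sum>t<n. g t * (\<Sum>i<n. lam (Suc i) ^ t * W $$ (i, j - 1)))"
    unfolding sum_distrib_left sum_distrib_right by (subst sum.swap) (simp add: mult_ac)
  also have "\<dots> = (\<Sum>t<n. if t = j - 1 then g t else 0)"
    by (intro sum.cong refl) (simp add: VW_entry[simplified])
  also have "\<dots> = g (j - 1)"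
    using \<open>j - 1 < n\<close> by simp
  finally show ?thesis .
qed

lemma sum_power_Vinv_eq_acoef:
  assumes dist: "inj_on lam {1..n}" and j: "j \<in> {1..n}"
  shows "(\<Sum>i\<in>{1..n}. lam i ^ n * Vinv n lam i j) = - acoef n lam (n + 1 - j)"
proof -
  have "(\<Sum>i\<in>{1..n}. lam i ^ n * Vinv n lam i j) = - acoef n lam (n - (j - 1))"
    by (rule sum_Vinv_row_combination[OF dist j power_eq_sum_acoef_if_root]) auto
  with j show ?thesis by (simp add: Suc_diff_le)
qed

lemma pfun_eq_sum_acoef_pk:
  assumes dist: "inj_on lam {1..n}"
  shows "pfun n L w \<theta> lam z = (\<Sum>j\<le>n. acoef n lam (n - j) * pk L w \<theta> (Suc j) z)"
proof -
  let ?p = "\<lambda>j. pk L w \<theta> j z"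
  have "pfun n L w \<theta> lam z = ?p (n + 1) - (\<Sum>j\<in>{1..n}. (\<Sum>i\<in>{1..n}. lam i ^ n * Vinv n lam i j) * ?p j)"
    unfolding pfun_def sum_distrib_right by (subst sum.swap) simp
  also have "\<dots> = ?p (n + 1) + (\<Sum>j\<in>{1..n}. acoef n lam (n + 1 - j) * ?p j)"
  proof -
    have "(\<Sum>j\<in>{1..n}. (\<Sum>i\<in>{1..n}. lam i ^ n * Vinv n lam i j) * ?p j)
        = (\<Sum>j\<in>{1..n}. - (acoef n lam (n + 1 - j) * ?p j))"
    proof (rule sum.cong[OF refl])
      fix j assume "j \<in> {1..n}"
      then show "(\<Sum>i\<in>{1..n}. lam i ^ n * Vinv n lam i j) * ?p j = - (acoef n lam (n + 1 - j) * ?p j)"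
        by (simp only: sum_power_Vinv_eq_acoef[OF dist] mult_minus_left)
    qed
    then show ?thesis by (simp add: sum_negf)
  qed
  also have "\<dots> = (\<Sum>j\<le>n. acoef n lam (n - j) * ?p (Suc j))"
    by (simp add: sum.atLeast1_atMost_eq lessThan_Suc_atMost[symmetric])
  finally show ?thesis .
qed

lemma pk_Suc_eq:
  "pk L w \<theta> (Suc k) z = z ^ (2 * k) * (of_real \<theta> * z + 1)
     - z * (\<Sum>m<k. cinner w ((L ^\<^sub>m m) *\<^sub>v w) * z ^ (2 * (k - 1 - m)))"
proof (induction k)
  case 0
  then show ?case by simp
next
  case (Suc k)
  let ?c = "\<lambda>m. cinner w ((L ^\<^sub>m m) *\<^sub>v w)"
  have "(\<Sum>m<Suc k. ?c m * z ^ (2 * (Suc k - 1 - m))) = z\<^sup>2 * (\<Sum>m<k. ?c m * z ^ (2 * (k - 1 - m))) + ?c k"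
  proof -
    have "2 * (Suc k - 1 - m) = 2 + 2 * (k - 1 - m)" if "m < k" for m
      using that by auto
    then have "(\<Sum>m<k. ?c m * z ^ (2 * (Suc k - 1 - m))) = z\<^sup>2 * (\<Sum>m<k. ?c m * z ^ (2 * (k - 1 - m)))"
      unfolding sum_distrib_left by (intro sum.cong) (simp_all add: power_add power2_eq_square)
    then show ?thesis by simp
  qed
  moreover have "z ^ (2 * Suc k) = z\<^sup>2 * z ^ (2 * k)" by (simp add: power_add[symmetric])
  ultimately show ?case
    by (simp only: pk.simps Suc.IH) (simp add: ring_distribs mult_ac)
qed

lemma sum_triangle_reindex:
  fixes a c :: "nat \<Rightarrow> 'a::comm_semiring_1"
  shows "(\<Sum>j\<le>n. \<Sum>m<j. a (n - j) * c m * z ^ (2 * (j - 1 - m)))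
       = (\<Sum>j\<in>{1..n}. (\<Sum>k\<in>{1..j}. a (j - k) * c (k - 1)) * z ^ (2 * (n - j)))"
proof -
  have "(\<Sum>j\<le>n. \<Sum>m<j. a (n - j) * c m * z ^ (2 * (j - 1 - m)))
      = (\<Sum>(j, m)\<in>Sigma {..n} (\<lambda>j. {..<j}). a (n - j) * c m * z ^ (2 * (j - 1 - m)))"
    by (rule sum.Sigma) auto
  also have "\<dots> = (\<Sum>(j, k)\<in>Sigma {1..n} (\<lambda>j. {1..j}). a (j - k) * c (k - 1) * z ^ (2 * (n - j)))"
    by (rule sum.reindex_bij_witness[where i = "\<lambda>(j, k). (n - j + k, k - 1)"
          and j = "\<lambda>(j, m). (n - j + m + 1, m + 1)"]) (auto simp: Suc_diff_le)
  also have "\<dots> = (\<Sum>j\<in>{1..n}. (\<Sum>k\<in>{1..j}. a (j - k) * c (k - 1)) * z ^ (2 * (n - j)))"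
    by (subst sum.Sigma[symmetric]) (auto simp: sum_distrib_right)
  finally show ?thesis .
qed

theorem lemma5p2:
  fixes n :: nat and L :: "complex mat" and w :: "complex vec" and \<theta> :: real
    and lam :: "nat \<Rightarrow> complex"
  assumes herm: "hermitian_mat n L"
    and w: "w \<in> carrier_vec n"
    and basis: "krylov_basis n L w"
    and eig: "lam ` {1..n} = {\<mu>. eigenvalue L \<mu>}"
    and dist: "inj_on lam {1..n}"
  shows "\<forall>z. pfun n L w \<theta> lam z =
     (of_real \<theta> * z + 1) * det (z^2 \<cdot>\<^sub>m 1\<^sub>m n - L)
     - z * (\<Sum>j\<in>{1..n}. (\<Sum>k\<in>{1..j}. acoef n lam (j - k) * cinner w ((L ^\<^sub>m (k - 1)) *\<^sub>v w))
                          * z ^ (2 * (n - j)))"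
proof
  fix z :: complex
  have L: "L \<in> carrier_mat n n" using herm unfolding hermitian_mat_def by simp
  let ?a = "acoef n lam" and ?c = "\<lambda>m. cinner w ((L ^\<^sub>m m) *\<^sub>v w)"
  have "pfun n L w \<theta> lam z = (\<Sum>j\<le>n. ?a (n - j) * pk L w \<theta> (Suc j) z)"
    by (rule pfun_eq_sum_acoef_pk[OF dist])
  also have "\<dots> = (of_real \<theta> * z + 1) * (\<Sum>j\<le>n. ?a (n - j) * z ^ (2 * j))
      - z * (\<Sum>j\<le>n. \<Sum>m<j. ?a (n - j) * ?c m * z ^ (2 * (j - 1 - m)))"
    by (simp add: pk_Suc_eq sum_distrib_left sum_distrib_right right_diff_distrib
        sum_subtractf mult_ac)
  also have "\<dots> = (of_real \<theta> * z + 1) * det (z\<^sup>2 \<cdot>\<^sub>m 1\<^sub>m n - L)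
      - z * (\<Sum>j\<in>{1..n}. (\<Sum>k\<in>{1..j}. ?a (j - k) * ?c (k - 1)) * z ^ (2 * (n - j)))"
    by (simp only: det_char_mat_eq_sum_acoef[OF L eig dist] power_mult[symmetric]
        sum_triangle_reindex[where a = ?a and c = ?c])
  finally show "pfun n L w \<theta> lam z = (of_real \<theta> * z + 1) * det (z\<^sup>2 \<cdot>\<^sub>m 1\<^sub>m n - L)
      - z * (\<Sum>j\<in>{1..n}. (\<Sum>k\<in>{1..j}. ?a (j - k) * ?c (k - 1)) * z ^ (2 * (n - j)))" .
qed

end
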